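(* In the setting described in the context, fix $\mathbf W^{[t]}\in\mathcal B$ with $\mathbf F^{[t]}:=\mathbf F(\mathbf W^{[t]})$ invertible, let $\bm\Phi^{[t]}=(\mathbf F^{[t]})^{-2}$, and let $\xi_k^{[t]},\eta_k^{[t]},\beta_k^{[t]},\bm\Sigma_1^{[t]},\bm\Sigma_2^{[t]},\mathbf Q^{[t]}$ be the quantities of the context evaluated at $\mathbf W^{[t]}$. Define for $\mathbf W=[\mathbf w_{c1},\dots,\mathbf w_{cK},\mathbf W_s]$ $$r_k^{[t]}(\mathbf W)=\log(1+\xi_k^{[t]})+2\Re\{\mathbf h_k^H\mathbf w_{ck}\eta_k^{[t]}\}-\xi_k^{[t]}-\beta_k^{[t]}\Big(\sum_{j=1}^K|\mathbf h_k^H\mathbf w_{cj}|^2+\|\mathbf h_k^H\mathbf W_s\|_F^2+\sigma_{ck}^2\Big).$$ Then the problem $$\max_{\mathbf W\in\mathcal B}\ \delta_c\sum_{k=1}^K r_k^{[t]}(\mathbf W)+\delta_s\big(\mathrm{tr}(\mathbf F(\mathbf W)\bm\Phi^{[t]})-2\,\mathrm{tr}(\mathbf F^{[t]})\big)$$ can be recast as $$\max_{\mathbf W\in\mathcal B}\ 2\delta_c\Re\{\mathrm{tr}(\mathbf W_c\bm\Sigma_1^{[t]}\mathbf H^H)\}+\delta_s\Re\{\mathrm{tr}(\mathbf W\mathbf W^H\mathbf Q^{[t]})\}-\delta_c\,\mathrm{tr}(\mathbf W\mathbf W^H\mathbf H\bm\Sigma_2^{[t]}\mathbf H^H),$$ i.e.,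 the two objectives differ on $\mathcal B$ by a quantity that does not depend on $\mathbf W$.
   Context: Positive integers $N_t,N_r,K,M,L$, nonnegative integer $N_s$; channels $\mathbf h_k\in\mathbb C^{N_t}$, $\mathbf H=[\mathbf h_1,\dots,\mathbf h_K]$, noise variances $\sigma_{ck}^2>0$; $\sigma_s^2>0$; weights $\delta_c,\delta_s\ge0$; $P_t>0$. $\mathbf W=[\mathbf W_c,\mathbf W_s]\in\mathbb C^{N_t\times(K+N_s)}$, $\mathbf W_c=[\mathbf w_{c1},\dots,\mathbf w_{cK}]$, $\mathbf R_x=\mathbf W\mathbf W^H$; $\mathcal B=\{\mathbf W:\mathrm{tr}(\mathbf W\mathbf W^H)=P_t\}$. Sensing model: differentiable $\mathbf a:\mathbb R^2\to\mathbb C^{N_t}$, $\mathbf b:\mathbb R^2\to\mathbb C^{N_r}$; parameters $\theta_m,\phi_m\in\mathbb R,\alpha_m\in\mathbb C$; $\mathbf A=[\mathbf a(\theta_m,\phi_m)]_m$, $\mathbf B=[\mathbf b(\theta_m,\phi_m)]_m$, $\mathbf U=\mathrm{diag}(\alpha_m)$; $\dot{\mathbf A}_\theta,\dot{\mathbf A}_\phi,\dot{\mathbf B}_\theta,\dot{\mathbf B}_\phi$ have $m$-th columns the partial derivatives of $\mathbf a$ resp. $\mathbf b$ with respect to first resp. second argument at $(\theta_m,\phi_m)$. $\mathbf F(\mathbf W)=\frac{2L}{\sigma_s^2}\begin{bmatrix}\Re\mathbf F_{11}&\Re\mathbf F_{12}&\Re\mathbf F_{13}&-\Im\mathbf F_{13}\\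 \Re\mathbf F_{12}^{\mathsf T}&\Re\mathbf F_{22}&\Re\mathbf F_{23}&-\Im\mathbf F_{23}\\ \Re\mathbf F_{13}^{\mathsf T}&\Re\mathbf F_{23}^{\mathsf T}&\Re\mathbf F_{33}&-\Im\mathbf F_{33}\\ -\Im\mathbf F_{13}^{\mathsf T}&-\Im\mathbf F_{23}^{\mathsf T}&-\Im\mathbf F_{33}^{\mathsf T}&\Re\mathbf F_{33}\end{bmatrix}$, with $\mathbf F_{11}=(\mathbf U\mathbf A^H\mathbf R_x\mathbf A\mathbf U^H)^{\mathsf T}\odot(\dot{\mathbf B}_\theta^H\dot{\mathbf B}_\theta)+(\mathbf U\mathbf A^H\mathbf R_x\dot{\mathbf A}_\theta\mathbf U^H)^{\mathsf T}\odot(\mathbf B^H\dot{\mathbf B}_\theta)+(\mathbf U\dot{\mathbf A}_\theta^H\mathbf R_x\mathbf A\mathbf U^H)^{\mathsf T}\odot(\dot{\mathbf B}_\theta^H\mathbf B)+(\mathbf U\dot{\mathbf A}_\theta^H\mathbf R_x\dot{\mathbf A}_\theta\mathbf U^H)^{\mathsf T}\odot(\mathbf B^H\mathbf B)$; $\mathbf F_{12}=(\mathbf U\mathbf A^H\mathbf R_x\mathbf A\mathbf U^H)^{\mathsf T}\odot(\dot{\mathbf B}_\theta^H\dot{\mathbf B}_\phi)+(\mathbf U\mathbf A^H\mathbf R_x\dot{\mathbf A}_\theta\mathbf U^H)^{\mathsf T}\odot(\mathbf B^H\dot{\mathbf B}_\phi)+(\mathbf U\dot{\mathbf A}_\phi^H\mathbf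 R_x\mathbf A\mathbf U^H)^{\mathsf T}\odot(\dot{\mathbf B}_\theta^H\mathbf B)+(\mathbf U\dot{\mathbf A}_\phi^H\mathbf R_x\dot{\mathbf A}_\theta\mathbf U^H)^{\mathsf T}\odot(\mathbf B^H\mathbf B)$; $\mathbf F_{22}$ = $\mathbf F_{11}$ with $\theta$ replaced by $\phi$; $\mathbf F_{13}=(\mathbf A^H\mathbf R_x\mathbf A\mathbf U^H)^{\mathsf T}\odot(\dot{\mathbf B}_\theta^H\mathbf B)+(\mathbf A^H\mathbf R_x\dot{\mathbf A}_\theta\mathbf U^H)^{\mathsf T}\odot(\mathbf B^H\mathbf B)$; $\mathbf F_{23}$ = $\mathbf F_{13}$ with $\theta$ replaced by $\phi$; $\mathbf F_{33}=(\mathbf A^H\mathbf R_x\mathbf A)^{\mathsf T}\odot(\mathbf B^H\mathbf B)$. Communications quantities at $\mathbf W$: $I_k=\sum_{j\ne k}|\mathbf h_k^H\mathbf w_{cj}|^2+\|\mathbf h_k^H\mathbf W_s\|_F^2+\sigma_{ck}^2$, $T_k=I_k+|\mathbf h_k^H\mathbf w_{ck}|^2$, $\xi_k=|\mathbf h_k^H\mathbf w_{ck}|^2/I_k$, $\eta_k=\overline{\mathbf h_k^H\mathbf w_{ck}}/I_k$ (which equals $\xi_k/(\mathbf h_k^H\mathbf w_{ck})$ when the latter is defined), $\beta_k=\xi_k/T_k$, $\bm\Sigma_1=\mathrm{diag}(\eta_1,\dots,\eta_K)$, $\bm\Sigma_2=\mathrm{diag}(\beta_1,\dots,\beta_K)$.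 Sensing quantity at $\mathbf W$ (with $\mathbf F(\mathbf W)$ invertible): $\bm\Phi=\mathbf F(\mathbf W)^{-2}$ (real symmetric), partitioned into $M\times M$ blocks $\bm\Phi_{pq}$, $p,q\in\{1,2,3,4\}$; with $\mathrm j$ the imaginary unit, $\mathbf Q_{11}=\mathbf A\mathbf U^H(\bm\Phi_{11}\odot\dot{\mathbf B}_\theta^H\dot{\mathbf B}_\theta)\mathbf U\mathbf A^H+\dot{\mathbf A}_\theta\mathbf U^H(\bm\Phi_{11}\odot\mathbf B^H\dot{\mathbf B}_\theta)\mathbf U\mathbf A^H+\mathbf A\mathbf U^H(\bm\Phi_{11}\odot\dot{\mathbf B}_\theta^H\mathbf B)\mathbf U\dot{\mathbf A}_\theta^H+\dot{\mathbf A}_\theta\mathbf U^H(\bm\Phi_{11}\odot\mathbf B^H\mathbf B)\mathbf U\dot{\mathbf A}_\theta^H$; $\mathbf Q_{12}=2[\mathbf A\mathbf U^H(\bm\Phi_{12}\odot\dot{\mathbf B}_\theta^H\dot{\mathbf B}_\phi)\mathbf U\mathbf A^H+\dot{\mathbf A}_\theta\mathbf U^H(\bm\Phi_{12}\odot\mathbf B^H\dot{\mathbf B}_\phi)\mathbf U\mathbf A^H+\mathbf A\mathbf U^H(\bm\Phi_{12}\odot\dot{\mathbf B}_\theta^H\mathbf B)\mathbf U\dot{\mathbf A}_\phi^H+\dot{\mathbf A}_\theta\mathbf U^H(\bm\Phi_{12}\odot\mathbf B^H\mathbf B)\mathbf U\dot{\mathbf A}_\phi^H]$; $\mathbf Q_{22}$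 = $\mathbf Q_{11}$ with $\bm\Phi_{11}$ replaced by $\bm\Phi_{22}$ and $\theta$ by $\phi$; $\mathbf Q_{13}=\mathbf A\mathbf U^H((2\bm\Phi_{13}+2\mathrm j\bm\Phi_{14})\odot\dot{\mathbf B}_\theta^H\mathbf B)\mathbf A^H+\dot{\mathbf A}_\theta\mathbf U^H((2\bm\Phi_{13}+2\mathrm j\bm\Phi_{14})\odot\mathbf B^H\mathbf B)\mathbf A^H$; $\mathbf Q_{23}=\mathbf A\mathbf U^H((2\bm\Phi_{23}+2\mathrm j\bm\Phi_{24})\odot\dot{\mathbf B}_\phi^H\mathbf B)\mathbf A^H+\dot{\mathbf A}_\phi\mathbf U^H((2\bm\Phi_{23}+2\mathrm j\bm\Phi_{24})\odot\mathbf B^H\mathbf B)\mathbf A^H$; $\mathbf Q_{33}=\mathbf A((\bm\Phi_{33}+\bm\Phi_{44}+2\mathrm j\bm\Phi_{34})\odot\mathbf B^H\mathbf B)\mathbf A^H$; $\mathbf Q=\frac{2L}{\sigma_s^2}(\mathbf Q_{11}+\mathbf Q_{12}+\mathbf Q_{13}+\mathbf Q_{22}+\mathbf Q_{23}+\mathbf Q_{33})$. *)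

theory Defs
  imports "HOL-Analysis.Analysis" "Jordan_Normal_Form.Matrix"
begin

definition ctrans :: "complex mat \<Rightarrow> complex mat" where
  "ctrans A = mat (dim_col A) (dim_row A) (\<lambda>(i,j). cnj (A $$ (j,i)))"

definition mtrace :: "'a::comm_monoid_add mat \<Rightarrow> 'a" where
  "mtrace A = (\<Sum>i<dim_row A. A $$ (i,i))"

definition hadamard :: "'a::times mat \<Rightarrow> 'a mat \<Rightarrow> 'a mat" where
  "hadamard A B = mat (dim_row A) (dim_col A) (\<lambda>(i,j). A $$ (i,j) * B $$ (i,j))"

definition ReM :: "complex mat \<Rightarrow> real mat" where "ReM A = map_mat Re A"
definition ImM :: "complex mat \<Rightarrow> real mat" where "ImM A = map_mat Im A"
definition cplxM :: "real mat \<Rightarrow> complex mat" where "cplxM A = map_mat complex_of_real A"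

definition diagc :: "nat \<Rightarrow> (nat \<Rightarrow> 'a::zero) \<Rightarrow> 'a mat" where
  "diagc n f = mat n n (\<lambda>(i,j). if i = j then f i else 0)"

definition mat_inv :: "'a::semiring_1 mat \<Rightarrow> 'a mat" where
  "mat_inv A = (SOME B. inverts_mat A B \<and> inverts_mat B A)"

definition block4 :: "nat \<Rightarrow> (nat \<Rightarrow> nat \<Rightarrow> 'a mat) \<Rightarrow> 'a mat" where
  "block4 M blk = mat (4*M) (4*M) (\<lambda>(i,j). blk (i div M) (j div M) $$ (i mod M, j mod M))"

definition subblock :: "nat \<Rightarrow> 'a mat \<Rightarrow> nat \<Rightarrow> nat \<Rightarrow> 'a mat" where
  "subblock M P p q = mat M M (\<lambda>(i,j). P $$ (p*M + i, q*M + j))"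

text \<open>a : R^2 -> C^N represented as a (theta,phi) i = i-th component (i < N).\<close>
definition steer :: "nat \<Rightarrow> nat \<Rightarrow> (real \<times> real \<Rightarrow> nat \<Rightarrow> complex) \<Rightarrow> (nat \<Rightarrow> real) \<Rightarrow> (nat \<Rightarrow> real) \<Rightarrow> complex mat" where
  "steer N M a \<theta> \<phi> = mat N M (\<lambda>(i,m). a (\<theta> m, \<phi> m) i)"

definition dsteer_theta :: "nat \<Rightarrow> nat \<Rightarrow> (real \<times> real \<Rightarrow> nat \<Rightarrow> complex) \<Rightarrow> (nat \<Rightarrow> real) \<Rightarrow> (nat \<Rightarrow> real) \<Rightarrow> complex mat" where
  "dsteer_theta N M a \<theta> \<phi> = mat N M (\<lambda>(i,m). vector_derivative (\<lambda>x. a (x, \<phi> m) i) (at (\<theta> m)))"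

definition dsteer_phi :: "nat \<Rightarrow> nat \<Rightarrow> (real \<times> real \<Rightarrow> nat \<Rightarrow> complex) \<Rightarrow> (nat \<Rightarrow> real) \<Rightarrow> (nat \<Rightarrow> real) \<Rightarrow> complex mat" where
  "dsteer_phi N M a \<theta> \<phi> = mat N M (\<lambda>(i,m). vector_derivative (\<lambda>y. a (\<theta> m, y) i) (at (\<phi> m)))"

text \<open>Blocks of the FIM. Arguments: A, B, Adot_theta (At), Adot_phi (Ap), Bdot_theta (Bt), Bdot_phi (Bp), U, Rx.
  F22 = F11 A B Ap Bp U Rx, F23 = F13 A B Ap Bp U Rx.\<close>
definition F11 :: "complex mat \<Rightarrow> complex mat \<Rightarrow> complex mat \<Rightarrow> complex mat \<Rightarrow> complex mat \<Rightarrow> complex mat \<Rightarrow> complex mat" where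
  "F11 A B At Bt U Rx =
     hadamard (transpose_mat (U * ctrans A * Rx * A * ctrans U)) (ctrans Bt * Bt)
   + hadamard (transpose_mat (U * ctrans A * Rx * At * ctrans U)) (ctrans B * Bt)
   + hadamard (transpose_mat (U * ctrans At * Rx * A * ctrans U)) (ctrans Bt * B)
   + hadamard (transpose_mat (U * ctrans At * Rx * At * ctrans U)) (ctrans B * B)"

definition F12 :: "complex mat \<Rightarrow> complex mat \<Rightarrow> complex mat \<Rightarrow> complex mat \<Rightarrow> complex mat \<Rightarrow> complex mat \<Rightarrow> complex mat \<Rightarrow> complex mat \<Rightarrow> complex mat" where
  "F12 A B At Ap Bt Bp U Rx =
     hadamard (transpose_mat (U * ctrans A * Rx * A * ctrans U)) (ctrans Bt * Bp)
   + hadamard (transpose_mat (U * ctrans A * Rx * At * ctrans U)) (ctrans B * Bp)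
   + hadamard (transpose_mat (U * ctrans Ap * Rx * A * ctrans U)) (ctrans Bt * B)
   + hadamard (transpose_mat (U * ctrans Ap * Rx * At * ctrans U)) (ctrans B * B)"

definition F13 :: "complex mat \<Rightarrow> complex mat \<Rightarrow> complex mat \<Rightarrow> complex mat \<Rightarrow> complex mat \<Rightarrow> complex mat \<Rightarrow> complex mat" where
  "F13 A B At Bt U Rx =
     hadamard (transpose_mat (ctrans A * Rx * A * ctrans U)) (ctrans Bt * B)
   + hadamard (transpose_mat (ctrans A * Rx * At * ctrans U)) (ctrans B * B)"

definition F33 :: "complex mat \<Rightarrow> complex mat \<Rightarrow> complex mat \<Rightarrow> complex mat" where
  "F33 A B Rx = hadamard (transpose_mat (ctrans A * Rx * A)) (ctrans B * B)"

text \<open>The FIM F(W) (as a function of Rx = W W^H), size 4M x 4M, M = dim_col A.\<close>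
definition FIM :: "nat \<Rightarrow> real \<Rightarrow> complex mat \<Rightarrow> complex mat \<Rightarrow> complex mat \<Rightarrow> complex mat \<Rightarrow> complex mat \<Rightarrow> complex mat \<Rightarrow> complex mat \<Rightarrow> complex mat \<Rightarrow> real mat" where
  "FIM L \<sigma>s A B At Ap Bt Bp U Rx =
    (let f11 = F11 A B At Bt U Rx; f12 = F12 A B At Ap Bt Bp U Rx; f22 = F11 A B Ap Bp U Rx;
         f13 = F13 A B At Bt U Rx; f23 = F13 A B Ap Bp U Rx; f33 = F33 A B Rx;
         blk = (\<lambda>p q.
           if p = 0 then (if q = 0 then ReM f11 else if q = 1 then ReM f12 else if q = 2 then ReM f13 else - ImM f13)
           else if p = 1 then (if q = 0 then transpose_mat (ReM f12) else if q = 1 then ReM f22 else if q = 2 then ReM f23 else - ImM f23)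
           else if p = 2 then (if q = 0 then transpose_mat (ReM f13) else if q = 1 then transpose_mat (ReM f23) else if q = 2 then ReM f33 else - ImM f33)
           else (if q = 0 then - transpose_mat (ImM f13) else if q = 1 then - transpose_mat (ImM f23) else if q = 2 then - transpose_mat (ImM f33) else ReM f33))
     in (2 * real L / \<sigma>s\<^sup>2) \<cdot>\<^sub>m block4 (dim_col A) blk)"

text \<open>The matrix Q built from Phi (real 4M x 4M). Block indices are 0-based: Phi_pq of the paper is
  subblock M Phi (p-1) (q-1).\<close>
definition Qblk11 :: "real mat \<Rightarrow> complex mat \<Rightarrow> complex mat \<Rightarrow> complex mat \<Rightarrow> complex mat \<Rightarrow> complex mat \<Rightarrow> complex mat" where
  "Qblk11 P A B At Bt U =
     A * ctrans U * hadamard (cplxM P) (ctrans Bt * Bt) * U * ctrans A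
   + At * ctrans U * hadamard (cplxM P) (ctrans B * Bt) * U * ctrans A
   + A * ctrans U * hadamard (cplxM P) (ctrans Bt * B) * U * ctrans At
   + At * ctrans U * hadamard (cplxM P) (ctrans B * B) * U * ctrans At"

definition Qblk12 :: "real mat \<Rightarrow> complex mat \<Rightarrow> complex mat \<Rightarrow> complex mat \<Rightarrow> complex mat \<Rightarrow> complex mat \<Rightarrow> complex mat \<Rightarrow> complex mat \<Rightarrow> complex mat" where
  "Qblk12 P A B At Ap Bt Bp U = 2 \<cdot>\<^sub>m (
     A * ctrans U * hadamard (cplxM P) (ctrans Bt * Bp) * U * ctrans A
   + At * ctrans U * hadamard (cplxM P) (ctrans B * Bp) * U * ctrans A
   + A * ctrans U * hadamard (cplxM P) (ctrans Bt * B) * U * ctrans Ap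
   + At * ctrans U * hadamard (cplxM P) (ctrans B * B) * U * ctrans Ap)"

text \<open>Q13 / Q23: P is Phi_13 (resp. Phi_23), P' is Phi_14 (resp. Phi_24).\<close>
definition Qblk13 :: "real mat \<Rightarrow> real mat \<Rightarrow> complex mat \<Rightarrow> complex mat \<Rightarrow> complex mat \<Rightarrow> complex mat \<Rightarrow> complex mat \<Rightarrow> complex mat" where
  "Qblk13 P P' A B At Bt U =
    (let C = 2 \<cdot>\<^sub>m cplxM P + (2 * \<i>) \<cdot>\<^sub>m cplxM P' in
       A * ctrans U * hadamard C (ctrans Bt * B) * ctrans A
     + At * ctrans U * hadamard C (ctrans B * B) * ctrans A)"

definition Qblk33 :: "real mat \<Rightarrow> real mat \<Rightarrow> real mat \<Rightarrow> complex mat \<Rightarrow> complex mat \<Rightarrow> complex mat" where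
  "Qblk33 P33 P44 P34 A B =
     A * hadamard (cplxM P33 + cplxM P44 + (2 * \<i>) \<cdot>\<^sub>m cplxM P34) (ctrans B * B) * ctrans A"

definition Qmat :: "nat \<Rightarrow> real \<Rightarrow> real mat \<Rightarrow> complex mat \<Rightarrow> complex mat \<Rightarrow> complex mat \<Rightarrow> complex mat \<Rightarrow> complex mat \<Rightarrow> complex mat \<Rightarrow> complex mat \<Rightarrow> complex mat" where
  "Qmat L \<sigma>s Phi A B At Ap Bt Bp U =
    (let M = dim_col A; P = subblock M Phi in
     complex_of_real (2 * real L / \<sigma>s\<^sup>2) \<cdot>\<^sub>m
      (Qblk11 (P 0 0) A B At Bt U + Qblk12 (P 0 1) A B At Ap Bt Bp U + Qblk13 (P 0 2) (P 0 3) A B At Bt U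
     + Qblk11 (P 1 1) A B Ap Bp U + Qblk13 (P 1 2) (P 1 3) A B Ap Bp U + Qblk33 (P 2 2) (P 3 3) (P 2 3) A B))"

text \<open>hw H W k j = h_k^H w_j, where h_k = k-th column of H, w_j = j-th column of W.
  Columns 0..K-1 of W form W_c, columns K..K+Ns-1 form W_s.\<close>
definition hw :: "complex mat \<Rightarrow> complex mat \<Rightarrow> nat \<Rightarrow> nat \<Rightarrow> complex" where
  "hw H W k j = (ctrans H * W) $$ (k, j)"

definition Icomm :: "nat \<Rightarrow> nat \<Rightarrow> complex mat \<Rightarrow> (nat \<Rightarrow> real) \<Rightarrow> complex mat \<Rightarrow> nat \<Rightarrow> real" where
  "Icomm K Ns H \<sigma>c W k = (\<Sum>j\<in>{..<K} - {k}. (cmod (hw H W k j))\<^sup>2)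
      + (\<Sum>j\<in>{K..<K+Ns}. (cmod (hw H W k j))\<^sup>2) + (\<sigma>c k)\<^sup>2"

definition Tcomm :: "nat \<Rightarrow> nat \<Rightarrow> complex mat \<Rightarrow> (nat \<Rightarrow> real) \<Rightarrow> complex mat \<Rightarrow> nat \<Rightarrow> real" where
  "Tcomm K Ns H \<sigma>c W k = Icomm K Ns H \<sigma>c W k + (cmod (hw H W k k))\<^sup>2"

definition xi :: "nat \<Rightarrow> nat \<Rightarrow> complex mat \<Rightarrow> (nat \<Rightarrow> real) \<Rightarrow> complex mat \<Rightarrow> nat \<Rightarrow> real" where
  "xi K Ns H \<sigma>c W k = (cmod (hw H W k k))\<^sup>2 / Icomm K Ns H \<sigma>c W k"

definition eta :: "nat \<Rightarrow> nat \<Rightarrow> complex mat \<Rightarrow> (nat \<Rightarrow> real) \<Rightarrow> complex mat \<Rightarrow> nat \<Rightarrow> complex" where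
  "eta K Ns H \<sigma>c W k = cnj (hw H W k k) / complex_of_real (Icomm K Ns H \<sigma>c W k)"

definition beta :: "nat \<Rightarrow> nat \<Rightarrow> complex mat \<Rightarrow> (nat \<Rightarrow> real) \<Rightarrow> complex mat \<Rightarrow> nat \<Rightarrow> real" where
  "beta K Ns H \<sigma>c W k = xi K Ns H \<sigma>c W k / Tcomm K Ns H \<sigma>c W k"

definition rsur :: "nat \<Rightarrow> nat \<Rightarrow> complex mat \<Rightarrow> (nat \<Rightarrow> real) \<Rightarrow> complex mat \<Rightarrow> complex mat \<Rightarrow> nat \<Rightarrow> real" where
  "rsur K Ns H \<sigma>c Wt W k =
     ln (1 + xi K Ns H \<sigma>c Wt k) + 2 * Re (hw H W k k * eta K Ns H \<sigma>c Wt k) - xi K Ns H \<sigma>c Wt k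
     - beta K Ns H \<sigma>c Wt k * ((\<Sum>j<K. (cmod (hw H W k j))\<^sup>2) + (\<Sum>j\<in>{K..<K+Ns}. (cmod (hw H W k j))\<^sup>2) + (\<sigma>c k)\<^sup>2)"

definition Wcomm :: "nat \<Rightarrow> complex mat \<Rightarrow> complex mat" where
  "Wcomm K W = mat (dim_row W) K (\<lambda>(i,j). W $$ (i,j))"


definition sensFIM :: "nat \<Rightarrow> nat \<Rightarrow> nat \<Rightarrow> nat \<Rightarrow> real \<Rightarrow> (real \<times> real \<Rightarrow> nat \<Rightarrow> complex) \<Rightarrow> (real \<times> real \<Rightarrow> nat \<Rightarrow> complex) \<Rightarrow> (nat \<Rightarrow> real) \<Rightarrow> (nat \<Rightarrow> real) \<Rightarrow> (nat \<Rightarrow> complex) \<Rightarrow> complex mat \<Rightarrow> real mat" where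
  "sensFIM Nt Nr M L \<sigma>s a b \<theta> \<phi> \<alpha> Rx =
     FIM L \<sigma>s (steer Nt M a \<theta> \<phi>) (steer Nr M b \<theta> \<phi>) (dsteer_theta Nt M a \<theta> \<phi>) (dsteer_phi Nt M a \<theta> \<phi>)
       (dsteer_theta Nr M b \<theta> \<phi>) (dsteer_phi Nr M b \<theta> \<phi>) (diagc M \<alpha>) Rx"

definition sensQ :: "nat \<Rightarrow> nat \<Rightarrow> nat \<Rightarrow> nat \<Rightarrow> real \<Rightarrow> (real \<times> real \<Rightarrow> nat \<Rightarrow> complex) \<Rightarrow> (real \<times> real \<Rightarrow> nat \<Rightarrow> complex) \<Rightarrow> (nat \<Rightarrow> real) \<Rightarrow> (nat \<Rightarrow> real) \<Rightarrow> (nat \<Rightarrow> complex) \<Rightarrow> real mat \<Rightarrow> complex mat" where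
  "sensQ Nt Nr M L \<sigma>s a b \<theta> \<phi> \<alpha> Phi =
     Qmat L \<sigma>s Phi (steer Nt M a \<theta> \<phi>) (steer Nr M b \<theta> \<phi>) (dsteer_theta Nt M a \<theta> \<phi>) (dsteer_phi Nt M a \<theta> \<phi>)
       (dsteer_theta Nr M b \<theta> \<phi>) (dsteer_phi Nr M b \<theta> \<phi>) (diagc M \<alpha>)"

end

theory Submission
  imports Defs
begin

(* Communication part: in r_k the only W-dependent terms are 2 Re (h_k^H w_ck eta_k) and
   -beta_k times the row energy sum_j |h_k^H w_j|^2; summed over k these are the diagonals of
   W_c Sigma_1 H^H and of H^H W W^H H Sigma_2 under the trace.

   Sensing part: F is real-linear in R_x = W W^H and Q is its adjoint for the trace pairing,
   i.e. tr (F(R) Phi) = Re tr (R Q(Phi)) for every symmetric Phi.  Blockwise this is the identity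
   tr (X (C o Y)) = sum_ij C_ij (X^T o Y)_ij for Hadamard products together with cyclicity of the
   trace.  Phi = F^[t]^-2 is symmetric because F^[t] is: its diagonal blocks are real parts of
   Hermitian matrices. *)

lemma index_mult_mat_sum:
  assumes "A \<in> carrier_mat n m" "B \<in> carrier_mat m p" "i < n" "j < p"
  shows "(A * B) $$ (i,j) = (\<Sum>k<m. A $$ (i,k) * B $$ (k,j))"
  using assms by (simp add: scalar_prod_def atLeast0LessThan)

lemma assoc_mult_mat_dim:
  fixes A B C :: "'a::semiring_0 mat"
  shows "dim_col A = dim_row B \<Longrightarrow> dim_col B = dim_row C \<Longrightarrow> A * B * C = A * (B * C)"
  by (rule assoc_mult_mat[of A "dim_row A" "dim_col A" B "dim_col B" C "dim_col C"]) auto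

lemma mtrace_mult_comm:
  fixes A B :: "'a::comm_ring_1 mat"
  assumes "A \<in> carrier_mat n m" "B \<in> carrier_mat m n"
  shows "mtrace (A * B) = mtrace (B * A)"
proof -
  have "mtrace (A * B) = (\<Sum>i<n. \<Sum>k<m. A $$ (i,k) * B $$ (k,i))"
    unfolding mtrace_def using assms by (intro sum.cong refl index_mult_mat_sum[OF assms]) auto
  also have "\<dots> = (\<Sum>k<m. \<Sum>i<n. B $$ (k,i) * A $$ (i,k))"
    by (subst sum.swap) (simp add: mult.commute)
  also have "\<dots> = mtrace (B * A)"
    unfolding mtrace_def using assms by (intro sum.cong refl index_mult_mat_sum[OF assms(2,1), symmetric]) auto
  finally show ?thesis .
qed

lemma mtrace_add:
  "A \<in> carrier_mat n n \<Longrightarrow> B \<in> carrier_mat n n \<Longrightarrow> mtrace (A + B) = mtrace A + mtrace B"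
  unfolding mtrace_def by (simp add: sum.distrib)

lemma mtrace_smult:
  fixes A :: "'a::comm_ring_1 mat"
  shows "A \<in> carrier_mat n n \<Longrightarrow> mtrace (c \<cdot>\<^sub>m A) = c * mtrace A"
  unfolding mtrace_def by (simp add: sum_distrib_left)

(* Dimension rather than carrier hypotheses: simp can discharge them for products. *)
lemma mtrace_mult_add_right:
  fixes R X Y :: "'a::comm_ring_1 mat"
  assumes "R \<in> carrier_mat n n" "dim_row X = n" "dim_col X = n" "dim_row Y = n" "dim_col Y = n"
  shows "mtrace (R * (X + Y)) = mtrace (R * X) + mtrace (R * Y)"
proof -
  have "X \<in> carrier_mat n n" "Y \<in> carrier_mat n n" using assms by auto
  with assms(1) show ?thesis by (simp add: mult_add_distrib_mat mtrace_add[of _ n])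
qed

lemma mtrace_mult_smult_right:
  fixes R X :: "'a::comm_ring_1 mat"
  assumes "R \<in> carrier_mat n n" "dim_row X = n" "dim_col X = n"
  shows "mtrace (R * (c \<cdot>\<^sub>m X)) = c * mtrace (R * X)"
proof -
  have "X \<in> carrier_mat n n" using assms by auto
  with assms(1) show ?thesis by (simp add: mult_smult_distrib mtrace_smult[of _ n])
qed

lemma transpose_smult_mat: "transpose_mat (c \<cdot>\<^sub>m A) = c \<cdot>\<^sub>m transpose_mat A"
  by (rule eq_matI) auto

lemma dim_ctrans [simp]: "dim_row (ctrans A) = dim_col A" "dim_col (ctrans A) = dim_row A"
  unfolding ctrans_def by auto

lemma ctrans_carrier_mat [simp]: "A \<in> carrier_mat n m \<Longrightarrow> ctrans A \<in> carrier_mat m n"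
  by auto

lemma index_ctrans [simp]: "i < dim_col A \<Longrightarrow> j < dim_row A \<Longrightarrow> ctrans A $$ (i,j) = cnj (A $$ (j,i))"
  unfolding ctrans_def by auto

lemma ctrans_ctrans [simp]: "ctrans (ctrans A) = A"
  by (rule eq_matI) auto

lemma ctrans_mult:
  assumes "dim_col A = dim_row B"
  shows "ctrans (A * B) = ctrans B * ctrans A"
proof (rule eq_matI)
  fix i j assume "i < dim_row (ctrans B * ctrans A)" "j < dim_col (ctrans B * ctrans A)"
  then show "ctrans (A * B) $$ (i,j) = (ctrans B * ctrans A) $$ (i,j)"
    using assms by (simp add: scalar_prod_def mult.commute)
qed auto

lemma ctrans_add:
  "dim_row A = dim_row B \<Longrightarrow> dim_col A = dim_col B \<Longrightarrow> ctrans (A + B) = ctrans A + ctrans B"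
  by (rule eq_matI) auto

lemma dim_hadamard [simp]: "dim_row (hadamard A B) = dim_row A" "dim_col (hadamard A B) = dim_col A"
  unfolding hadamard_def by auto

lemma index_hadamard [simp]:
  "i < dim_row A \<Longrightarrow> j < dim_col A \<Longrightarrow> hadamard A B $$ (i,j) = A $$ (i,j) * B $$ (i,j)"
  unfolding hadamard_def by auto

lemma ctrans_hadamard_transpose:
  "dim_row Y = dim_col X \<Longrightarrow> dim_col Y = dim_row X \<Longrightarrow>
   ctrans (hadamard (transpose_mat X) Y) = hadamard (transpose_mat (ctrans X)) (ctrans Y)"
  by (rule eq_matI) auto

lemma transpose_ReM_hermitian:
  assumes "ctrans F = F"
  shows "transpose_mat (ReM F) = ReM F"
proof (rule eq_matI)
  fix i j assume ij: "i < dim_row (ReM F)" "j < dim_col (ReM F)"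
  have "F $$ (j,i) = ctrans F $$ (j,i)" using assms by simp
  also have "\<dots> = cnj (F $$ (i,j))" using ij arg_cong[OF assms, of dim_row] unfolding ReM_def by simp
  finally show "transpose_mat (ReM F) $$ (i,j) = ReM F $$ (i,j)"
    using ij arg_cong[OF assms, of dim_row] unfolding ReM_def by simp
qed (use arg_cong[OF assms, of dim_row] arg_cong[OF assms, of dim_col] in \<open>simp_all add: ReM_def\<close>)

lemma invertible_mat_mat_inv:
  fixes F :: "'a::comm_ring_1 mat"
  assumes F: "F \<in> carrier_mat n n" and inv: "invertible_mat F"
  shows "mat_inv F \<in> carrier_mat n n" "F * mat_inv F = 1\<^sub>m n" "mat_inv F * F = 1\<^sub>m n"
proof -
  have "\<exists>B. inverts_mat F B \<and> inverts_mat B F"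
    using inv unfolding invertible_mat_def by blast
  then have "inverts_mat F (mat_inv F) \<and> inverts_mat (mat_inv F) F"
    unfolding mat_inv_def by (rule someI_ex)
  then have right: "F * mat_inv F = 1\<^sub>m n" and left: "mat_inv F * F = 1\<^sub>m (dim_row (mat_inv F))"
    using F unfolding inverts_mat_def by auto
  have "dim_col (mat_inv F) = n" using arg_cong[OF right, of dim_col] by simp
  moreover have "dim_row (mat_inv F) = n" using arg_cong[OF left, of dim_col] F by simp
  ultimately show "mat_inv F \<in> carrier_mat n n" "F * mat_inv F = 1\<^sub>m n" "mat_inv F * F = 1\<^sub>m n"
    using right left by auto
qed

lemma transpose_mat_inv_symmetric:
  fixes F :: "'a::comm_ring_1 mat"
  assumes F: "F \<in> carrier_mat n n" and inv: "invertible_mat F" and sym: "transpose_mat F = F"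
  shows "transpose_mat (mat_inv F) = mat_inv F"
proof -
  note G = invertible_mat_mat_inv[OF F inv]
  have "F * transpose_mat (mat_inv F) = 1\<^sub>m n"
    using transpose_mult[OF G(1) F] G(3) sym by simp
  then have "mat_inv F * (F * transpose_mat (mat_inv F)) = mat_inv F"
    using G(1) by simp
  moreover have "mat_inv F * (F * transpose_mat (mat_inv F)) = transpose_mat (mat_inv F)"
    using G F by (simp flip: assoc_mult_mat[of _ n n _ n _ n])
  ultimately show ?thesis by simp
qed

section \<open>Traces of Hadamard products\<close>

definition frob_pair :: "nat \<Rightarrow> 'a::comm_semiring_0 mat \<Rightarrow> 'a mat \<Rightarrow> 'a" where
  "frob_pair M C F = (\<Sum>i<M. \<Sum>j<M. C $$ (i,j) * F $$ (i,j))"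

lemma frob_pair_add_left:
  "C' \<in> carrier_mat M M \<Longrightarrow> frob_pair M (C + C') F = frob_pair M C F + frob_pair M C' F"
  unfolding frob_pair_def by (simp add: sum.distrib[symmetric] distrib_right)

lemma frob_pair_add_right:
  "dim_row F' = M \<Longrightarrow> dim_col F' = M \<Longrightarrow> frob_pair M C (F + F') = frob_pair M C F + frob_pair M C F'"
  unfolding frob_pair_def by (simp add: sum.distrib[symmetric] distrib_left)

lemma frob_pair_smult_left:
  "C \<in> carrier_mat M M \<Longrightarrow> frob_pair M (c \<cdot>\<^sub>m C) F = c * frob_pair M C F"
  unfolding frob_pair_def by (simp add: sum_distrib_left mult.assoc)

lemma frob_pair_uminus_left:
  fixes C :: "'a::comm_ring mat"
  shows "C \<in> carrier_mat M M \<Longrightarrow> frob_pair M (- C) F = - frob_pair M C F"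
  unfolding frob_pair_def by (simp add: sum_negf)

lemma frob_pair_transpose:
  assumes "X \<in> carrier_mat M M" "P \<in> carrier_mat M M"
  shows "frob_pair M (transpose_mat X) P = frob_pair M X (transpose_mat P)"
  unfolding frob_pair_def using assms by (subst sum.swap) simp

lemma cplxM_carrier_mat [simp]: "P \<in> carrier_mat n m \<Longrightarrow> cplxM P \<in> carrier_mat n m"
  unfolding cplxM_def by simp

lemma ReM_carrier_mat [simp]: "F \<in> carrier_mat n m \<Longrightarrow> ReM F \<in> carrier_mat n m"
  unfolding ReM_def by simp

lemma ImM_carrier_mat [simp]: "F \<in> carrier_mat n m \<Longrightarrow> ImM F \<in> carrier_mat n m"
  unfolding ImM_def by simp

lemma frob_pair_ReM:
  "F \<in> carrier_mat M M \<Longrightarrow> P \<in> carrier_mat M M \<Longrightarrow> frob_pair M (ReM F) P = Re (frob_pair M (cplxM P) F)"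
  unfolding frob_pair_def ReM_def cplxM_def by (simp add: Re_sum mult.commute)

lemma frob_pair_ImM:
  "F \<in> carrier_mat M M \<Longrightarrow> P \<in> carrier_mat M M \<Longrightarrow> frob_pair M (ImM F) P = Im (frob_pair M (cplxM P) F)"
  unfolding frob_pair_def ImM_def cplxM_def by (simp add: Im_sum mult.commute)

lemma mtrace_mult_hadamard:
  assumes "X \<in> carrier_mat M M" "C \<in> carrier_mat M M" "Y \<in> carrier_mat M M"
  shows "mtrace (X * hadamard C Y) = frob_pair M C (hadamard (transpose_mat X) Y)"
proof -
  have "mtrace (X * hadamard C Y) = (\<Sum>i<M. \<Sum>k<M. X $$ (i,k) * (C $$ (k,i) * Y $$ (k,i)))"
    unfolding mtrace_def using assms by (simp add: scalar_prod_def atLeast0LessThan)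
  also have "\<dots> = (\<Sum>k<M. \<Sum>i<M. C $$ (k,i) * (X $$ (i,k) * Y $$ (k,i)))"
    by (subst sum.swap) (simp add: algebra_simps)
  also have "\<dots> = frob_pair M C (hadamard (transpose_mat X) Y)"
    unfolding frob_pair_def using assms by simp
  finally show ?thesis .
qed

lemma mtrace_sandwich_hadamard:
  fixes R :: "'a::comm_ring_1 mat"
  assumes "R \<in> carrier_mat n n" "X \<in> carrier_mat n M" "Z \<in> carrier_mat M n"
    and "C \<in> carrier_mat M M" "Y \<in> carrier_mat M M"
  shows "mtrace (R * (X * hadamard C Y * Z)) = frob_pair M C (hadamard (transpose_mat (Z * R * X)) Y)"
proof -
  have "mtrace (R * (X * hadamard C Y * Z)) = mtrace ((R * X * hadamard C Y) * Z)"
    using assms by (simp add: assoc_mult_mat_dim)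
  also have "\<dots> = mtrace (Z * (R * X * hadamard C Y))"
    using assms by (intro mtrace_mult_comm[of _ n M]) auto
  also have "\<dots> = mtrace ((Z * R * X) * hadamard C Y)"
    using assms by (simp add: assoc_mult_mat_dim)
  also have "\<dots> = frob_pair M C (hadamard (transpose_mat (Z * R * X)) Y)"
    using assms by (intro mtrace_mult_hadamard) auto
  finally show ?thesis .
qed

lemma mtrace_sandwich_hadamard_mult_right:
  fixes R :: "'a::comm_ring_1 mat"
  assumes "R \<in> carrier_mat n n" "X \<in> carrier_mat n M" "V \<in> carrier_mat M M" "Z \<in> carrier_mat M n"
    and "C \<in> carrier_mat M M" "Y \<in> carrier_mat M M"
  shows "mtrace (R * (X * hadamard C Y * V * Z)) = frob_pair M C (hadamard (transpose_mat (V * Z * R * X)) Y)"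
  using assms mtrace_sandwich_hadamard[of R n X M "V * Z" C Y]
  by (simp add: assoc_mult_mat_dim)

section \<open>Block matrices\<close>

lemma block_index_less:
  fixes p i k M :: nat
  assumes "p < k" "i < M"
  shows "p*M + i < k*M"
proof -
  have "Suc p * M \<le> k * M" using assms(1) by (intro mult_le_mono1) simp
  then show ?thesis using assms(2) by simp
qed

lemma sum_lessThan_mult_blocks:
  fixes k M :: nat
  shows "(\<Sum>i<k*M. f i) = (\<Sum>p<k. \<Sum>a<M. f (p*M + a))"
proof -
  have "(\<Sum>i\<in>{p*M..<p*M+M}. f i) = (\<Sum>a<M. f (p*M + a))" for p
    using sum.shift_bounds_nat_ivl[of f 0 "p*M" M] by (simp add: atLeast0LessThan add.commute)
  then show ?thesis by (simp add: sum.nat_group[of f M k, symmetric])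
qed

lemma subblock_carrier_mat [simp]: "subblock M P p q \<in> carrier_mat M M"
  unfolding subblock_def by simp

lemma dim_block4 [simp]: "dim_row (block4 M blk) = 4*M" "dim_col (block4 M blk) = 4*M"
  unfolding block4_def by simp_all

lemma block4_carrier_mat [simp]: "block4 M blk \<in> carrier_mat (4*M) (4*M)"
  by auto

lemma transpose_subblock:
  assumes "P \<in> carrier_mat (4*M) (4*M)" "p < 4" "q < 4"
  shows "transpose_mat (subblock M P q p) = subblock M (transpose_mat P) p q"
  using assms block_index_less[of p 4] block_index_less[of q 4]
  unfolding subblock_def by (intro eq_matI) auto

lemma mtrace_block4_mult:
  assumes "P \<in> carrier_mat (4*M) (4*M)"
  shows "mtrace ((c \<cdot>\<^sub>m block4 M blk) * P)
       = c * (\<Sum>p<4. \<Sum>q<4. frob_pair M (blk p q) (transpose_mat (subblock M P q p)))"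
proof -
  have "mtrace ((c \<cdot>\<^sub>m block4 M blk) * P) = (\<Sum>i<4*M. \<Sum>k<4*M. c * block4 M blk $$ (i,k) * P $$ (k,i))"
    unfolding mtrace_def using assms by (simp add: scalar_prod_def atLeast0LessThan)
  also have "\<dots> = (\<Sum>p<4. \<Sum>a<M. \<Sum>q<4. \<Sum>b<M. c * (blk p q $$ (a,b) * transpose_mat (subblock M P q p) $$ (a,b)))"
    unfolding sum_lessThan_mult_blocks
    by (intro sum.cong refl) (simp add: block4_def subblock_def block_index_less mult.assoc)
  also have "\<dots> = c * (\<Sum>p<4. \<Sum>q<4. frob_pair M (blk p q) (transpose_mat (subblock M P q p)))"
    unfolding frob_pair_def sum_distrib_left by (intro sum.cong refl sum.swap)
  finally show ?thesis .
qed

lemma transpose_block4: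
  assumes "\<And>p q. p < 4 \<Longrightarrow> q < 4 \<Longrightarrow> blk p q \<in> carrier_mat M M \<and> transpose_mat (blk p q) = blk q p"
  shows "transpose_mat (block4 M blk) = block4 M blk"
proof (rule eq_matI)
  fix i j assume "i < dim_row (block4 M blk)" "j < dim_col (block4 M blk)"
  then have ij: "i < 4*M" "j < 4*M" by simp_all
  then have blk: "blk (i div M) (j div M) \<in> carrier_mat M M"
    "transpose_mat (blk (i div M) (j div M)) = blk (j div M) (i div M)"
    using assms by (simp_all add: less_mult_imp_div_less)
  have "transpose_mat (block4 M blk) $$ (i,j) = blk (j div M) (i div M) $$ (j mod M, i mod M)"
    using ij by (simp add: block4_def)
  also have "\<dots> = transpose_mat (blk (i div M) (j div M)) $$ (j mod M, i mod M)"
    by (simp add: blk(2))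
  also have "\<dots> = blk (i div M) (j div M) $$ (i mod M, j mod M)"
    using ij blk(1) by (simp add: less_mult_imp_div_less)
  also have "\<dots> = block4 M blk $$ (i,j)"
    using ij by (simp add: block4_def)
  finally show "transpose_mat (block4 M blk) $$ (i,j) = block4 M blk $$ (i,j)" .
qed simp_all

section \<open>The sensing Fisher information\<close>

lemma dim_Qblk [simp]:
  "dim_row (Qblk11 P A B At Bt U) = dim_row At" "dim_col (Qblk11 P A B At Bt U) = dim_row At"
  "dim_row (Qblk12 P A B At Ap Bt Bp U) = dim_row At" "dim_col (Qblk12 P A B At Ap Bt Bp U) = dim_row Ap"
  "dim_row (Qblk13 P P' A B At Bt U) = dim_row At" "dim_col (Qblk13 P P' A B At Bt U) = dim_row A"
  "dim_row (Qblk33 P P' P'' A B) = dim_row A" "dim_col (Qblk33 P P' P'' A B) = dim_row A"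
  unfolding Qblk11_def Qblk12_def Qblk13_def Qblk33_def Let_def by simp_all

context
  fixes A B U R :: "complex mat" and n nr M :: nat
  assumes A: "A \<in> carrier_mat n M" and B: "B \<in> carrier_mat nr M"
    and U: "U \<in> carrier_mat M M" and R: "R \<in> carrier_mat n n"
begin

private lemma sandwich_factors_carrier_mat [simp]:
  "X \<in> carrier_mat n M \<Longrightarrow> X * ctrans U \<in> carrier_mat n M"
  "Y \<in> carrier_mat nr M \<Longrightarrow> Z \<in> carrier_mat nr M \<Longrightarrow> ctrans Y * Z \<in> carrier_mat M M"
  using U by auto

lemma F_blocks_carrier_mat [simp]:
  assumes "At \<in> carrier_mat n M" "Ap \<in> carrier_mat n M"
  shows "F11 A B At Bt U R \<in> carrier_mat M M" "F12 A B At Ap Bt Bp U R \<in> carrier_mat M M"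
    "F13 A B At Bt U R \<in> carrier_mat M M" "F33 A B R \<in> carrier_mat M M"
  unfolding F11_def F12_def F13_def F33_def using A U R assms by auto

(* The first simp applies the trace identity summand by summand; only then are the products
   reassociated, since the two sides group them differently. *)
lemma mtrace_mult_Qblk11:
  assumes "At \<in> carrier_mat n M" "Bt \<in> carrier_mat nr M" "P \<in> carrier_mat M M"
  shows "mtrace (R * Qblk11 P A B At Bt U) = frob_pair M (cplxM P) (F11 A B At Bt U R)"
  unfolding Qblk11_def F11_def using A B U R assms
  by (simp add: mtrace_mult_add_right[of R n] mtrace_sandwich_hadamard_mult_right[of R n _ M])
    (simp add: assoc_mult_mat_dim frob_pair_add_right)

lemma mtrace_mult_Qblk12:
  assumes "At \<in> carrier_mat n M" "Ap \<in> carrier_mat n M" "Bt \<in> carrier_mat nr M" "Bp \<in> carrier_mat nr M"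
    and "P \<in> carrier_mat M M"
  shows "mtrace (R * Qblk12 P A B At Ap Bt Bp U) = 2 * frob_pair M (cplxM P) (F12 A B At Ap Bt Bp U R)"
  unfolding Qblk12_def F12_def using A B U R assms
  by (simp add: mtrace_mult_smult_right[of R n] mtrace_mult_add_right[of R n]
      mtrace_sandwich_hadamard_mult_right[of R n _ M])
    (simp add: assoc_mult_mat_dim frob_pair_add_right)

lemma mtrace_mult_Qblk13:
  assumes "At \<in> carrier_mat n M" "Bt \<in> carrier_mat nr M" "P \<in> carrier_mat M M" "P' \<in> carrier_mat M M"
  shows "mtrace (R * Qblk13 P P' A B At Bt U)
       = 2 * frob_pair M (cplxM P) (F13 A B At Bt U R) + 2 * \<i> * frob_pair M (cplxM P') (F13 A B At Bt U R)"
  unfolding Qblk13_def F13_def Let_def using A B U R assms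
  by (simp add: mtrace_mult_add_right[of R n] mtrace_sandwich_hadamard[of R n _ M])
    (simp add: assoc_mult_mat_dim frob_pair_add_right frob_pair_add_left frob_pair_smult_left algebra_simps)

lemma mtrace_mult_Qblk33:
  assumes "P \<in> carrier_mat M M" "P' \<in> carrier_mat M M" "P'' \<in> carrier_mat M M"
  shows "mtrace (R * Qblk33 P P' P'' A B) = frob_pair M (cplxM P) (F33 A B R) + frob_pair M (cplxM P') (F33 A B R)
           + 2 * \<i> * frob_pair M (cplxM P'') (F33 A B R)"
  unfolding Qblk33_def F33_def using A B R assms
  by (simp add: mtrace_sandwich_hadamard[of R n _ M] frob_pair_add_left frob_pair_smult_left)

lemma mtrace_FIM_mult:
  assumes At: "At \<in> carrier_mat n M" and Ap: "Ap \<in> carrier_mat n M"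
    and Bt: "Bt \<in> carrier_mat nr M" and Bp: "Bp \<in> carrier_mat nr M"
    and P: "P \<in> carrier_mat (4*M) (4*M)" and sym: "transpose_mat P = P"
  shows "mtrace (FIM L \<sigma>s A B At Ap Bt Bp U R * P) = Re (mtrace (R * Qmat L \<sigma>s P A B At Ap Bt Bp U))"
proof -
  have sum4: "(\<Sum>p<4. f p) = f 0 + f 1 + f 2 + f 3" for f :: "nat \<Rightarrow> real"
    by (simp add: eval_nat_numeral)
  have blocks: "transpose_mat (subblock M P q p) = subblock M P p q" if "p < 4" "q < 4" for p q
    using transpose_subblock[OF P that] sym by simp
  have dA: "dim_col A = M" using A by simp
  show ?thesis
    unfolding FIM_def Qmat_def Let_def dA mtrace_block4_mult[OF P]
    using A B U R At Ap Bt Bp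
    by (simp add: sum4 blocks frob_pair_transpose frob_pair_uminus_left frob_pair_ReM frob_pair_ImM
      mtrace_mult_smult_right[of R n] mtrace_mult_add_right[of R n]
      mtrace_mult_Qblk11 mtrace_mult_Qblk12 mtrace_mult_Qblk13 mtrace_mult_Qblk33)
qed

lemma ctrans_F11:
  assumes "At \<in> carrier_mat n M" "Bt \<in> carrier_mat nr M" "ctrans R = R"
  shows "ctrans (F11 A B At Bt U R) = F11 A B At Bt U R"
  unfolding F11_def using A B U R assms
  by (simp add: ctrans_add ctrans_hadamard_transpose ctrans_mult assoc_mult_mat_dim)
    (rule eq_matI; simp add: ac_simps)

lemma ctrans_F33:
  assumes "ctrans R = R"
  shows "ctrans (F33 A B R) = F33 A B R"
  unfolding F33_def using A B U R assms
  by (simp add: ctrans_hadamard_transpose ctrans_mult assoc_mult_mat_dim)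

lemma transpose_FIM:
  assumes "At \<in> carrier_mat n M" "Ap \<in> carrier_mat n M" "Bt \<in> carrier_mat nr M" "Bp \<in> carrier_mat nr M"
    and "ctrans R = R"
  shows "transpose_mat (FIM L \<sigma>s A B At Ap Bt Bp U R) = FIM L \<sigma>s A B At Ap Bt Bp U R"
proof -
  have four: "p < 4 \<longleftrightarrow> p = 0 \<or> p = 1 \<or> p = 2 \<or> p = (3::nat)" for p by auto
  have dA: "dim_col A = M" using A by simp
  show ?thesis
    unfolding FIM_def Let_def transpose_smult_mat dA
    by (subst transpose_block4)
      (use A assms in \<open>unfold four, elim disjE; simp add: transpose_uminus transpose_ReM_hermitian ctrans_F11 ctrans_F33\<close>, rule refl)
qed

end

lemma FIM_carrier_mat: "FIM L \<sigma>s A B At Ap Bt Bp U R \<in> carrier_mat (4 * dim_col A) (4 * dim_col A)"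
  unfolding FIM_def Let_def by simp

lemma steering_carrier_mat [simp]:
  "steer N M a \<theta> \<phi> \<in> carrier_mat N M" "dsteer_theta N M a \<theta> \<phi> \<in> carrier_mat N M"
  "dsteer_phi N M a \<theta> \<phi> \<in> carrier_mat N M" "diagc M \<alpha> \<in> carrier_mat M M"
  unfolding steer_def dsteer_theta_def dsteer_phi_def diagc_def by simp_all

lemma mtrace_sensFIM_mult_inverse_square:
  assumes R: "R \<in> carrier_mat Nt Nt" and Rt: "Rt \<in> carrier_mat Nt Nt" "ctrans Rt = Rt"
    and inv: "invertible_mat (sensFIM Nt Nr M L \<sigma>s a b \<theta> \<phi> \<alpha> Rt)"
  defines "G \<equiv> mat_inv (sensFIM Nt Nr M L \<sigma>s a b \<theta> \<phi> \<alpha> Rt)"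
  shows "mtrace (sensFIM Nt Nr M L \<sigma>s a b \<theta> \<phi> \<alpha> R * (G * G))
       = Re (mtrace (R * sensQ Nt Nr M L \<sigma>s a b \<theta> \<phi> \<alpha> (G * G)))"
proof -
  have F: "sensFIM Nt Nr M L \<sigma>s a b \<theta> \<phi> \<alpha> Rt \<in> carrier_mat (4*M) (4*M)"
    using FIM_carrier_mat unfolding sensFIM_def by (metis steering_carrier_mat(1) carrier_matD(2))
  have "transpose_mat (sensFIM Nt Nr M L \<sigma>s a b \<theta> \<phi> \<alpha> Rt) = sensFIM Nt Nr M L \<sigma>s a b \<theta> \<phi> \<alpha> Rt"
    unfolding sensFIM_def using Rt by (intro transpose_FIM[where n=Nt and nr=Nr and M=M]) simp_all
  then have "transpose_mat G = G"
    unfolding G_def using F inv by (rule transpose_mat_inv_symmetric[rotated 2])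
  moreover have G: "G \<in> carrier_mat (4*M) (4*M)"
    unfolding G_def using F inv by (rule invertible_mat_mat_inv)
  ultimately have "transpose_mat (G * G) = G * G"
    by (simp add: transpose_mult[OF G G])
  then show ?thesis
    unfolding sensFIM_def sensQ_def using R G by (intro mtrace_FIM_mult[where n=Nt and nr=Nr and M=M]) simp_all
qed

section \<open>The communication rates\<close>

lemma dim_diagc [simp]: "dim_row (diagc K f) = K" "dim_col (diagc K f) = K"
  unfolding diagc_def by simp_all

lemma index_mult_diagc:
  assumes "i < dim_row X" "k < K" "dim_col X = K"
  shows "(X * diagc K f) $$ (i,k) = X $$ (i,k) * f k"
proof -
  have "(X * diagc K f) $$ (i,k) = (\<Sum>l<K. X $$ (i,l) * diagc K f $$ (l,k))"
    using assms by (intro index_mult_mat_sum) auto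
  also have "\<dots> = (\<Sum>l<K. if l = k then X $$ (i,l) * f l else 0)"
    using assms(2) by (intro sum.cong) (auto simp: diagc_def)
  also have "\<dots> = X $$ (i,k) * f k"
    using assms(2) by simp
  finally show ?thesis .
qed

lemma mtrace_mult_diagc:
  "Y \<in> carrier_mat K K \<Longrightarrow> mtrace (Y * diagc K f) = (\<Sum>k<K. Y $$ (k,k) * f k)"
  unfolding mtrace_def by (simp only: index_mult_mat(2) carrier_matD) (intro sum.cong refl index_mult_diagc, auto)

lemma mtrace_Wcomm_diagc:
  assumes H: "H \<in> carrier_mat Nt K" and W: "W \<in> carrier_mat Nt (K + Ns)"
  shows "mtrace (Wcomm K W * diagc K f * ctrans H) = (\<Sum>k<K. hw H W k k * f k)"
proof -
  have Wc: "Wcomm K W \<in> carrier_mat Nt K" using W unfolding Wcomm_def by auto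
  have "mtrace (Wcomm K W * diagc K f * ctrans H) = mtrace (ctrans H * Wcomm K W * diagc K f)"
    using H Wc by (subst mtrace_mult_comm[of _ Nt K]) (auto simp: assoc_mult_mat_dim)
  also have "\<dots> = (\<Sum>k<K. (ctrans H * Wcomm K W) $$ (k,k) * f k)"
    using H Wc by (intro mtrace_mult_diagc) auto
  also have "\<dots> = (\<Sum>k<K. hw H W k k * f k)"
    using H W Wc unfolding hw_def by (simp add: scalar_prod_def Wcomm_def)
  finally show ?thesis .
qed

lemma mtrace_gram_diagc:
  assumes H: "H \<in> carrier_mat Nt K" and W: "W \<in> carrier_mat Nt (K + Ns)"
  shows "mtrace (W * ctrans W * H * diagc K f * ctrans H)
       = (\<Sum>k<K. complex_of_real (\<Sum>j<K+Ns. (cmod (hw H W k j))\<^sup>2) * f k)"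
proof -
  let ?G = "ctrans H * W"
  have G: "?G \<in> carrier_mat K (K+Ns)" using H W by auto
  have "mtrace (W * ctrans W * H * diagc K f * ctrans H) = mtrace (ctrans H * (W * ctrans W * H * diagc K f))"
    using H W by (intro mtrace_mult_comm[of _ Nt K]) auto
  also have "\<dots> = mtrace (?G * ctrans ?G * diagc K f)"
    using H W by (simp add: ctrans_mult assoc_mult_mat_dim)
  also have "\<dots> = (\<Sum>k<K. (?G * ctrans ?G) $$ (k,k) * f k)"
    using G by (intro mtrace_mult_diagc) auto
  also have "\<dots> = (\<Sum>k<K. complex_of_real (\<Sum>j<K+Ns. (cmod (hw H W k j))\<^sup>2) * f k)"
  proof (intro sum.cong refl)
    fix k assume "k \<in> {..<K}"
    then have "(?G * ctrans ?G) $$ (k,k) = (\<Sum>j<K+Ns. ?G $$ (k,j) * cnj (?G $$ (k,j)))"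
      using G H W by (subst index_mult_mat_sum[of _ K "K+Ns" _ K]) (auto intro!: sum.cong)
    then show "(?G * ctrans ?G) $$ (k,k) * f k = complex_of_real (\<Sum>j<K+Ns. (cmod (hw H W k j))\<^sup>2) * f k"
      unfolding hw_def by (simp add: complex_norm_square[symmetric] del: of_real_power)
  qed
  finally show ?thesis .
qed

lemma sum_rsur:
  assumes H: "H \<in> carrier_mat Nt K" and W: "W \<in> carrier_mat Nt (K + Ns)"
  shows "(\<Sum>k<K. rsur K Ns H \<sigma>c Wt W k)
       = (\<Sum>k<K. ln (1 + xi K Ns H \<sigma>c Wt k) - xi K Ns H \<sigma>c Wt k - beta K Ns H \<sigma>c Wt k * (\<sigma>c k)\<^sup>2)
         + 2 * Re (mtrace (Wcomm K W * diagc K (eta K Ns H \<sigma>c Wt) * ctrans H))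
         - Re (mtrace (W * ctrans W * H * diagc K (\<lambda>k. complex_of_real (beta K Ns H \<sigma>c Wt k)) * ctrans H))"
proof -
  have split: "(\<Sum>j<K+Ns. g j) = (\<Sum>j<K. g j) + (\<Sum>j\<in>{K..<K+Ns}. g j)" for g :: "nat \<Rightarrow> real"
    by (metis atLeast0LessThan le_add1 sum.atLeastLessThan_concat zero_le)
  show ?thesis
    unfolding mtrace_Wcomm_diagc[OF H W] mtrace_gram_diagc[OF H W] rsur_def split
    by (simp add: Re_sum sum.distrib sum_subtractf sum_distrib_left algebra_simps)
qed

theorem proposition2:
  fixes Nt Nr K M L Ns :: nat
    and H :: "complex mat" and \<sigma>c :: "nat \<Rightarrow> real" and \<sigma>s \<delta>c \<delta>s Pt :: real
    and a b :: "real \<times> real \<Rightarrow> nat \<Rightarrow> complex"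
    and \<theta> \<phi> :: "nat \<Rightarrow> real" and \<alpha> :: "nat \<Rightarrow> complex"
    and Wt :: "complex mat"
  assumes "0 < Nt" and "0 < Nr" and "0 < K" and "0 < M" and "0 < L"
    and "H \<in> carrier_mat Nt K"
    and "\<forall>k<K. 0 < \<sigma>c k" and "0 < \<sigma>s" and "0 \<le> \<delta>c" and "0 \<le> \<delta>s" and "0 < Pt"
    and "\<forall>i<Nt. \<forall>p. (\<lambda>q. a q i) differentiable (at p)"
    and "\<forall>i<Nr. \<forall>p. (\<lambda>q. b q i) differentiable (at p)"
    and "Wt \<in> carrier_mat Nt (K + Ns)" and "mtrace (Wt * ctrans Wt) = complex_of_real Pt"
    and "invertible_mat (sensFIM Nt Nr M L \<sigma>s a b \<theta> \<phi> \<alpha> (Wt * ctrans Wt))"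
  shows "\<exists>c::real. \<forall>W. W \<in> carrier_mat Nt (K + Ns) \<and> mtrace (W * ctrans W) = complex_of_real Pt \<longrightarrow>
     \<delta>c * (\<Sum>k<K. rsur K Ns H \<sigma>c Wt W k)
       + \<delta>s * (mtrace (sensFIM Nt Nr M L \<sigma>s a b \<theta> \<phi> \<alpha> (W * ctrans W)
                  * (mat_inv (sensFIM Nt Nr M L \<sigma>s a b \<theta> \<phi> \<alpha> (Wt * ctrans Wt))
                     * mat_inv (sensFIM Nt Nr M L \<sigma>s a b \<theta> \<phi> \<alpha> (Wt * ctrans Wt))))
               - 2 * mtrace (sensFIM Nt Nr M L \<sigma>s a b \<theta> \<phi> \<alpha> (Wt * ctrans Wt)))
     = 2 * \<delta>c * Re (mtrace (Wcomm K W * diagc K (eta K Ns H \<sigma>c Wt) * ctrans H))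
       + \<delta>s * Re (mtrace (W * ctrans W
            * sensQ Nt Nr M L \<sigma>s a b \<theta> \<phi> \<alpha>
                (mat_inv (sensFIM Nt Nr M L \<sigma>s a b \<theta> \<phi> \<alpha> (Wt * ctrans Wt))
                 * mat_inv (sensFIM Nt Nr M L \<sigma>s a b \<theta> \<phi> \<alpha> (Wt * ctrans Wt)))))
       - \<delta>c * Re (mtrace (W * ctrans W * H * diagc K (\<lambda>k. complex_of_real (beta K Ns H \<sigma>c Wt k)) * ctrans H))
       + c"
proof -
  note H = assms(6) and Wt = assms(14) and inv = assms(16)
  let ?F = "sensFIM Nt Nr M L \<sigma>s a b \<theta> \<phi> \<alpha>"
  have sensing: "mtrace (?F (W * ctrans W) * (mat_inv (?F (Wt * ctrans Wt)) * mat_inv (?F (Wt * ctrans Wt))))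
      = Re (mtrace (W * ctrans W * sensQ Nt Nr M L \<sigma>s a b \<theta> \<phi> \<alpha>
          (mat_inv (?F (Wt * ctrans Wt)) * mat_inv (?F (Wt * ctrans Wt)))))"
    if "W \<in> carrier_mat Nt (K + Ns)" for W
    using that Wt inv by (intro mtrace_sensFIM_mult_inverse_square) (simp_all add: ctrans_mult)
  show ?thesis
    by (intro exI[of _ "\<delta>c * (\<Sum>k<K. ln (1 + xi K Ns H \<sigma>c Wt k) - xi K Ns H \<sigma>c Wt k
          - beta K Ns H \<sigma>c Wt k * (\<sigma>c k)\<^sup>2) - \<delta>s * (2 * mtrace (?F (Wt * ctrans Wt)))"] allI impI)
      (auto simp: sensing sum_rsur[OF H] algebra_simps)
qed

end
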